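(* Let $\mathfrak{R}$ be an alternative ring with a nontrivial idempotent $e_1$ and Peirce decomposition $\mathfrak{R}=\mathfrak{R}_{11}\oplus\mathfrak{R}_{12}\oplus\mathfrak{R}_{21}\oplus\mathfrak{R}_{22}$, satisfying: (i) if $a_{11}\in\mathfrak{R}_{11}$, $a_{22}\in\mathfrak{R}_{22}$ and $[a_{11}+a_{22},\mathfrak{R}_{12}]=0$, then $a_{11}+a_{22}\in\mathcal{Z}(\mathfrak{R})$; (ii) if $a_{11}\in\mathfrak{R}_{11}$, $a_{22}\in\mathfrak{R}_{22}$ and $[a_{11}+a_{22},\mathfrak{R}_{21}]=0$, then $a_{11}+a_{22}\in\mathcal{Z}(\mathfrak{R})$. Let $\mathcal{D}$ be a multiplicative Lie-type derivation of $\mathfrak{R}$. Then for $i\in\{1,2\}$ and any $a_{ii},b_{ii}\in\mathfrak{R}_{ii}$ there exists $z_{a_{ii},b_{ii}}\in\mathcal{Z}(\mathfrak{R})$ such that $\mathcal{D}(a_{ii}+b_{ii})=\mathcal{D}(a_{ii})+\mathcal{D}(b_{ii})+z_{a_{ii},b_{ii}}$.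
   Context: Rings are not assumed associative or unital. The associator is $(x,y,z)=(xy)z-x(yz)$; $\mathfrak{R}$ is alternative if $(x,x,y)=0=(y,x,x)$ for all $x,y$. $[x,y]=xy-yx$ and $\mathcal{Z}(\mathfrak{R})=\{r: [r,x]=0\ \forall x\in\mathfrak{R}\}$. Define $p_1(x)=x$, $p_n(x_1,\dots,x_n)=[p_{n-1}(x_1,\dots,x_{n-1}),x_n]$. For $n\ge2$, a (not necessarily additive) map $\mathcal{D}\colon\mathfrak{R}\to\mathfrak{R}$ is a multiplicative Lie $n$-derivation if $\mathcal{D}(p_n(x_1,\dots,x_n))=\sum_{i=1}^n p_n(x_1,\dots,\mathcal{D}(x_i),\dots,x_n)$ for all $x_i\in\mathfrak{R}$; a multiplicative Lie-type derivation is a multiplicative Lie $n$-derivation for some $n\ge2$. A nontrivial idempotent is $e_1\ne0$ with $e_1^2=e_1$ which is not a multiplicative identity. With $e_2a:=a-e_1a$, $ae_2:=a-ae_1$, set $\mathfrak{R}_{ij}=e_i\mathfrak{R}e_j$ ($i,j=1,2$), so $\mathfrak{R}=\bigoplus_{i,j}\mathfrak{R}_{ij}$. *)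

theory Defs
  imports Main
begin

text \<open>A (not necessarily associative, not necessarily unital) ring is modelled as an
abelian group 'a together with an explicit multiplication m, assumed biadditive.\<close>

definition ring_mult :: "('a::ab_group_add \<Rightarrow> 'a \<Rightarrow> 'a) \<Rightarrow> bool" where
  "ring_mult m \<longleftrightarrow> (\<forall>x y z. m (x + y) z = m x z + m y z) \<and> (\<forall>x y z. m x (y + z) = m x y + m x z)"

definition associator :: "('a::ab_group_add \<Rightarrow> 'a \<Rightarrow> 'a) \<Rightarrow> 'a \<Rightarrow> 'a \<Rightarrow> 'a \<Rightarrow> 'a" where
  "associator m x y z = m (m x y) z - m x (m y z)"

definition alternative_ring :: "('a::ab_group_add \<Rightarrow> 'a \<Rightarrow> 'a) \<Rightarrow> bool" where
  "alternative_ring m \<longleftrightarrow> ring_mult m \<and>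
     (\<forall>x y. associator m x x y = 0) \<and> (\<forall>x y. associator m y x x = 0)"

definition commutator :: "('a::ab_group_add \<Rightarrow> 'a \<Rightarrow> 'a) \<Rightarrow> 'a \<Rightarrow> 'a \<Rightarrow> 'a" where
  "commutator m x y = m x y - m y x"

definition center :: "('a::ab_group_add \<Rightarrow> 'a \<Rightarrow> 'a) \<Rightarrow> 'a set" where
  "center m = {r. \<forall>x. commutator m r x = 0}"

text \<open>p_n(x_1,...,x_n) for the list [x_1,...,x_n]: p_1(x)=x, p_n = [p_{n-1}, x_n].\<close>
fun lie_poly :: "('a::ab_group_add \<Rightarrow> 'a \<Rightarrow> 'a) \<Rightarrow> 'a list \<Rightarrow> 'a" where
  "lie_poly m [] = 0"
| "lie_poly m (x # xs) = foldl (commutator m) x xs"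

definition lie_n_derivation :: "('a::ab_group_add \<Rightarrow> 'a \<Rightarrow> 'a) \<Rightarrow> nat \<Rightarrow> ('a \<Rightarrow> 'a) \<Rightarrow> bool" where
  "lie_n_derivation m n D \<longleftrightarrow>
     (\<forall>xs. length xs = n \<longrightarrow>
        D (lie_poly m xs) = (\<Sum>i<n. lie_poly m (xs[i := D (xs ! i)])))"

definition lie_type_derivation :: "('a::ab_group_add \<Rightarrow> 'a \<Rightarrow> 'a) \<Rightarrow> ('a \<Rightarrow> 'a) \<Rightarrow> bool" where
  "lie_type_derivation m D \<longleftrightarrow> (\<exists>n\<ge>2. lie_n_derivation m n D)"

definition nontrivial_idempotent :: "('a::ab_group_add \<Rightarrow> 'a \<Rightarrow> 'a) \<Rightarrow> 'a \<Rightarrow> bool" where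
  "nontrivial_idempotent m e \<longleftrightarrow> e \<noteq> 0 \<and> m e e = e \<and> \<not> (\<forall>x. m e x = x \<and> m x e = x)"

text \<open>e_i a and a e_j, with e_2 a := a - e_1 a, a e_2 := a - a e_1.\<close>
definition lmul_e :: "('a::ab_group_add \<Rightarrow> 'a \<Rightarrow> 'a) \<Rightarrow> 'a \<Rightarrow> nat \<Rightarrow> 'a \<Rightarrow> 'a" where
  "lmul_e m e i a = (if i = 1 then m e a else a - m e a)"

definition rmul_e :: "('a::ab_group_add \<Rightarrow> 'a \<Rightarrow> 'a) \<Rightarrow> 'a \<Rightarrow> nat \<Rightarrow> 'a \<Rightarrow> 'a" where
  "rmul_e m e j a = (if j = 1 then m a e else a - m a e)"

definition peirce :: "('a::ab_group_add \<Rightarrow> 'a \<Rightarrow> 'a) \<Rightarrow> 'a \<Rightarrow> nat \<Rightarrow> nat \<Rightarrow> 'a set" where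
  "peirce m e i j = range (\<lambda>a. rmul_e m e j (lmul_e m e i a))"

end

(* Write T(u, v) = D(u + v) - D u - D v. Since D is a Lie n-derivation, T commutes with Lie
   polynomials: T(p_n(u, ys), p_n(v, ys)) = p_n(T(u, v), ys). As a and b commute with e, this
   gives p_n(T(a, b), e, ..., e) = 0, and since [_, e] acts on R21 + R12 as r + s |-> r - s, the
   off-diagonal Peirce components of T(a, b) vanish. For x in R12 there is v (b x if i = 1,
   x b if i = 2) commuting with x whose commutator with -e, resp. e, is [b, x]; playing T(a, v)
   against x and against -e, resp. e, gives p_n(T(a, b), x, e, ..., e) = 0, hence
   [T(a, b), x] = 0, and condition (i) puts T(a, b) in the centre. The Peirce multiplication
   rules needed (R12 R11 = 0, R22 R12 = 0, ...) follow from the associator being alternating. *)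

theory Submission
  imports Defs
begin

definition add_defect ::
    "('a::ab_group_add \<Rightarrow> 'b::ab_group_add) \<Rightarrow> 'a \<Rightarrow> 'a \<Rightarrow> 'b" where
  "add_defect D u v = D (u + v) - D u - D v"

lemma lie_poly_Cons_Nil [simp]: "lie_poly m [u] = u"
  by simp

lemma lie_poly_Cons_Cons [simp]: "lie_poly m (u # y # ys) = lie_poly m (commutator m u y # ys)"
  by simp

declare lie_poly.simps(2) [simp del]

lemma peirce_decomposition:
  obtains a11 a12 a21 a22
  where "a11 \<in> peirce m e 1 1" "a12 \<in> peirce m e 1 2"
    and "a21 \<in> peirce m e 2 1" "a22 \<in> peirce m e 2 2"
    and "a = a11 + a12 + a21 + a22"
proof -
  let ?c = "\<lambda>i j. rmul_e m e j (lmul_e m e i a)"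
  have "a = ?c 1 1 + ?c 1 2 + ?c 2 1 + ?c 2 2"
    by (simp add: lmul_e_def rmul_e_def)
  moreover have "?c i j \<in> peirce m e i j" for i j
    unfolding peirce_def by blast
  ultimately show ?thesis
    using that by blast
qed

locale nonassoc_ring =
  fixes m :: "'a::ab_group_add \<Rightarrow> 'a \<Rightarrow> 'a"
  assumes ring_mult: "ring_mult m"
begin

lemma m_add_left: "m (x + y) z = m x z + m y z"
  using ring_mult unfolding ring_mult_def by blast

lemma m_add_right: "m x (y + z) = m x y + m x z"
  using ring_mult unfolding ring_mult_def by blast

lemma m_zero_left [simp]: "m 0 y = 0"
  using m_add_left[of 0 0 y] by simp

lemma m_zero_right [simp]: "m x 0 = 0"
  using m_add_right[of x 0 0] by simp

lemma m_minus_left: "m (- x) y = - m x y"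
  using m_add_left[of "- x" x y] by (simp add: eq_neg_iff_add_eq_0)

lemma m_minus_right: "m x (- y) = - m x y"
  using m_add_right[of x "- y" y] by (simp add: eq_neg_iff_add_eq_0)

lemma m_diff_left: "m (x - y) z = m x z - m y z"
  using m_add_left[of x "- y" z] by (simp add: m_minus_left)

lemma m_diff_right: "m x (y - z) = m x y - m x z"
  using m_add_right[of x y "- z"] by (simp add: m_minus_right)

lemmas m_bilinear = m_add_left m_add_right m_minus_left m_minus_right m_diff_left m_diff_right

lemma commutator_add_left: "commutator m (u + v) y = commutator m u y + commutator m v y"
  unfolding commutator_def by (simp add: m_bilinear)

lemma commutator_add_right: "commutator m y (u + v) = commutator m y u + commutator m y v"
  unfolding commutator_def by (simp add: m_bilinear)

lemma commutator_zero_left [simp]: "commutator m 0 y = 0"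
  unfolding commutator_def by simp

lemma commutator_zero_right [simp]: "commutator m y 0 = 0"
  unfolding commutator_def by simp

lemma lie_poly_add: "lie_poly m ((u + v) # ys) = lie_poly m (u # ys) + lie_poly m (v # ys)"
  by (induction ys arbitrary: u v) (simp_all add: commutator_add_left)

lemma lie_poly_zero [simp]: "lie_poly m (0 # ys) = 0"
  by (induction ys) simp_all

lemma lie_poly_minus: "lie_poly m ((- u) # ys) = - lie_poly m (u # ys)"
  using lie_poly_add[of u "- u" ys] by (simp add: eq_neg_iff_add_eq_0 add.commute)

lemma lie_poly_diff: "lie_poly m ((u - v) # ys) = lie_poly m (u # ys) - lie_poly m (v # ys)"
  using lie_poly_add[of u "- v" ys] by (simp add: lie_poly_minus)

end

locale lie_n_der = nonassoc_ring +
  fixes D :: "'a::ab_group_add \<Rightarrow> 'a" and n :: nat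
  assumes derivation: "lie_n_derivation m n D"
    and two_le_n: "2 \<le> n"
begin

lemma D_lie_poly_Cons:
  assumes "length ys = n - 1"
  shows "D (lie_poly m (u # ys)) =
    lie_poly m (D u # ys) + (\<Sum>i<n - 1. lie_poly m (u # ys[i := D (ys ! i)]))"
proof -
  have "Suc (n - 1) = n"
    using two_le_n by simp
  then have "D (lie_poly m (u # ys)) =
      (\<Sum>i<Suc (n - 1). lie_poly m ((u # ys)[i := D ((u # ys) ! i)]))"
    using derivation assms unfolding lie_n_derivation_def by simp
  also have "\<dots> = lie_poly m (D u # ys) + (\<Sum>i<n - 1. lie_poly m (u # ys[i := D (ys ! i)]))"
    unfolding sum.lessThan_Suc_shift by simp
  finally show ?thesis .
qed

lemma D_zero: "D 0 = 0"
proof -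
  define ys where "ys = 0 # replicate (n - 2) (0::'a)"
  have "length ys = n - 1"
    using two_le_n by (simp add: ys_def)
  from D_lie_poly_Cons[OF this, of 0] show ?thesis
    by (simp add: ys_def)
qed

lemma add_defect_zero_left [simp]: "add_defect D 0 v = 0"
  by (simp add: add_defect_def D_zero)

lemma add_defect_zero_right [simp]: "add_defect D u 0 = 0"
  by (simp add: add_defect_def D_zero)

lemma add_defect_lie_poly:
  assumes "length ys = n - 1"
  shows "add_defect D (lie_poly m (u # ys)) (lie_poly m (v # ys)) =
    lie_poly m (add_defect D u v # ys)"
proof -
  note expand = D_lie_poly_Cons[OF assms]
  have "add_defect D (lie_poly m (u # ys)) (lie_poly m (v # ys)) =
      D (lie_poly m ((u + v) # ys)) - D (lie_poly m (u # ys)) - D (lie_poly m (v # ys))"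
    by (simp add: add_defect_def lie_poly_add)
  also have "\<dots> = lie_poly m (D (u + v) # ys) - lie_poly m (D u # ys) - lie_poly m (D v # ys)"
    unfolding expand by (simp add: lie_poly_add sum.distrib)
  also have "\<dots> = lie_poly m (add_defect D u v # ys)"
    by (simp add: add_defect_def lie_poly_diff)
  finally show ?thesis .
qed

text \<open>Both p(T(a, v), x, ys) and p(T(a, v), y, ys) vanish, hence so does p(T(a, v), x + y, ys);
  but [a, x + y] = [a, x] and [v, x + y] = [b, x].\<close>
lemma lie_poly_add_defect_eq_0:
  assumes "length ys = n - 2"
    and a: "commutator m a y = 0"
    and v: "commutator m v x = 0" "commutator m v y = commutator m b x"
  shows "lie_poly m (add_defect D a b # x # ys) = 0"
proof -
  have len: "length (z # ys) = n - 1" for z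
    using assms(1) two_le_n by simp
  have "lie_poly m (add_defect D a v # x # ys) = 0"
    using add_defect_lie_poly[OF len[of x], of a v] v(1) by simp
  moreover have "lie_poly m (add_defect D a v # y # ys) = 0"
    using add_defect_lie_poly[OF len[of y], of a v] a by simp
  ultimately have "lie_poly m (add_defect D a v # (x + y) # ys) = 0"
    by (simp add: commutator_add_right lie_poly_add)
  then have "add_defect D (lie_poly m (a # (x + y) # ys)) (lie_poly m (v # (x + y) # ys)) = 0"
    by (simp only: add_defect_lie_poly[OF len])
  then have "add_defect D (lie_poly m (a # x # ys)) (lie_poly m (b # x # ys)) = 0"
    using a v by (simp add: commutator_add_right)
  then show ?thesis
    by (simp only: add_defect_lie_poly[OF len])
qed

lemma lie_poly_add_defect_eq_0_of_commute:
  assumes "length ys = n - 2" "commutator m a x = 0" "commutator m b x = 0"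
  shows "lie_poly m (add_defect D a b # x # ys) = 0"
  using lie_poly_add_defect_eq_0[where y = x and v = b] assms by simp

end

locale alt_ring =
  fixes m :: "'a::ab_group_add \<Rightarrow> 'a \<Rightarrow> 'a"
  assumes alternative: "alternative_ring m"

sublocale alt_ring \<subseteq> nonassoc_ring
  using alternative by unfold_locales (simp add: alternative_ring_def)

context alt_ring
begin

lemma left_alternative: "m (m x x) y = m x (m x y)"
  using alternative unfolding alternative_ring_def associator_def by simp

lemma right_alternative: "m (m y x) x = m y (m x x)"
  using alternative unfolding alternative_ring_def associator_def by simp

lemma associator_swap_left: "associator m y x z = - associator m x y z"
proof -
  have "m (m (x + y) (x + y)) z = m (x + y) (m (x + y) z)"
    by (rule left_alternative)
  then show ?thesis
    using left_alternative[of x z] left_alternative[of y z]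
    by (simp add: associator_def m_bilinear algebra_simps)
qed

lemma associator_swap_right: "associator m x z y = - associator m x y z"
proof -
  have "m (m x (y + z)) (y + z) = m x (m (y + z) (y + z))"
    by (rule right_alternative)
  then show ?thesis
    using right_alternative[of x y] right_alternative[of x z]
    by (simp add: associator_def m_bilinear algebra_simps)
qed

lemma flexible: "m (m x y) x = m x (m y x)"
  using associator_swap_left[of y x x] right_alternative[of y x]
  by (simp add: associator_def)

end

locale alt_ring_idempotent = alt_ring +
  fixes e :: "'a::ab_group_add"
  assumes idempotent: "m e e = e"
begin

lemma idempotent_mult_left: "m e (m e a) = m e a"
  using left_alternative[of e a] idempotent by simp

lemma idempotent_mult_right: "m (m a e) e = m a e"
  using right_alternative[of a e] idempotent by simp

lemma peirce_11_iff: "y \<in> peirce m e 1 1 \<longleftrightarrow> m e y = y \<and> m y e = y"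
proof
  assume "y \<in> peirce m e 1 1"
  then obtain a where y: "y = m (m e a) e"
    by (auto simp: peirce_def lmul_e_def rmul_e_def)
  show "m e y = y \<and> m y e = y"
    unfolding y
    using flexible[of e "m e a"] idempotent_mult_left[of a] idempotent_mult_right[of "m e a"]
    by simp
next
  assume "m e y = y \<and> m y e = y"
  then have "y = rmul_e m e 1 (lmul_e m e 1 y)"
    by (simp add: lmul_e_def rmul_e_def)
  then show "y \<in> peirce m e 1 1"
    unfolding peirce_def by blast
qed

lemma peirce_12_iff: "y \<in> peirce m e 1 2 \<longleftrightarrow> m e y = y \<and> m y e = 0"
proof
  assume "y \<in> peirce m e 1 2"
  then obtain a where y: "y = m e a - m (m e a) e"
    by (auto simp: peirce_def lmul_e_def rmul_e_def)
  show "m e y = y \<and> m y e = 0"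
    unfolding y
    using flexible[of e "m e a"] idempotent_mult_left[of a] idempotent_mult_right[of "m e a"]
    by (simp add: m_bilinear)
next
  assume "m e y = y \<and> m y e = 0"
  then have "y = rmul_e m e 2 (lmul_e m e 1 y)"
    by (simp add: lmul_e_def rmul_e_def)
  then show "y \<in> peirce m e 1 2"
    unfolding peirce_def by blast
qed

lemma peirce_21_iff: "y \<in> peirce m e 2 1 \<longleftrightarrow> m e y = 0 \<and> m y e = y"
proof
  assume "y \<in> peirce m e 2 1"
  then obtain a where y: "y = m (a - m e a) e"
    by (auto simp: peirce_def lmul_e_def rmul_e_def)
  show "m e y = 0 \<and> m y e = y"
    unfolding y using flexible[of e a] flexible[of e "m e a"] idempotent_mult_left[of a]
      idempotent_mult_right[of a] idempotent_mult_right[of "m e a"]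
    by (simp add: m_bilinear)
next
  assume "m e y = 0 \<and> m y e = y"
  then have "y = rmul_e m e 1 (lmul_e m e 2 y)"
    by (simp add: lmul_e_def rmul_e_def)
  then show "y \<in> peirce m e 2 1"
    unfolding peirce_def by blast
qed

lemma peirce_22_iff: "y \<in> peirce m e 2 2 \<longleftrightarrow> m e y = 0 \<and> m y e = 0"
proof
  assume "y \<in> peirce m e 2 2"
  then obtain a where y: "y = (a - m e a) - m (a - m e a) e"
    by (auto simp: peirce_def lmul_e_def rmul_e_def)
  show "m e y = 0 \<and> m y e = 0"
    unfolding y using flexible[of e a] flexible[of e "m e a"] idempotent_mult_left[of a]
      idempotent_mult_right[of a] idempotent_mult_right[of "m e a"]
    by (simp add: m_bilinear)
next
  assume "m e y = 0 \<and> m y e = 0"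
  then have "y = rmul_e m e 2 (lmul_e m e 2 y)"
    by (simp add: lmul_e_def rmul_e_def)
  then show "y \<in> peirce m e 2 2"
    unfolding peirce_def by blast
qed

lemma commutator_peirce_diag_idempotent:
  assumes "i \<in> {1, 2}" "a \<in> peirce m e i i"
  shows "commutator m a e = 0"
  using assms peirce_11_iff peirce_22_iff by (auto simp: commutator_def)

lemma peirce_12_square:
  assumes "x \<in> peirce m e 1 2"
  shows "m x x = 0"
  using flexible[of x e] assms unfolding peirce_12_iff by simp

lemma peirce_11_mult_12:
  assumes "b \<in> peirce m e 1 1" "x \<in> peirce m e 1 2"
  shows "m b x \<in> peirce m e 1 2" "m x b = 0"
proof -
  have b: "m e b = b" "m b e = b" and x: "m e x = x" "m x e = 0"
    using assms unfolding peirce_11_iff peirce_12_iff by simp_all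
  have "associator m e b x = 0"
    using associator_swap_left[of b e x] b x by (simp add: associator_def)
  moreover have "associator m b x e = 0"
    using associator_swap_right[of b e x] b x by (simp add: associator_def)
  moreover have "associator m x e b = 0"
    using associator_swap_left[of e x b] associator_swap_right[of e x b]
      \<open>associator m e b x = 0\<close> by simp
  ultimately show "m b x \<in> peirce m e 1 2" "m x b = 0"
    using b x unfolding peirce_12_iff by (simp_all add: associator_def)
qed

lemma peirce_22_mult_12:
  assumes "d \<in> peirce m e 2 2" "x \<in> peirce m e 1 2"
  shows "m x d \<in> peirce m e 1 2" "m d x = 0"
proof -
  have d: "m e d = 0" "m d e = 0" and x: "m e x = x" "m x e = 0"
    using assms unfolding peirce_22_iff peirce_12_iff by simp_all
  have "associator m x e d = 0"
    using d x by (simp add: associator_def)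
  then have "associator m e x d = 0" "associator m x d e = 0" "associator m d e x = 0"
    using associator_swap_left[of x e d] associator_swap_right[of x e d]
      associator_swap_left[of e d x] associator_swap_right[of e d x] by simp_all
  then show "m x d \<in> peirce m e 1 2" "m d x = 0"
    using d x unfolding peirce_12_iff by (simp_all add: associator_def)
qed

lemma lie_poly_peirce_off_diag_replicate:
  assumes "r \<in> peirce m e 2 1" "s \<in> peirce m e 1 2"
  shows "lie_poly m ((r + s) # replicate k e) = r + (if even k then s else - s)"
  using assms(2)
proof (induction k arbitrary: s)
  case 0
  then show ?case by simp
next
  case (Suc k)
  have "commutator m (r + s) e = r + - s"
    using assms(1) Suc.prems unfolding peirce_21_iff peirce_12_iff
    by (simp add: commutator_def m_bilinear)
  moreover have "- s \<in> peirce m e 1 2"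
    using Suc.prems unfolding peirce_12_iff by (simp add: m_bilinear)
  ultimately show ?case
    using Suc.IH[of "- s"] by simp
qed

lemma peirce_off_diag_eq_0_of_lie_poly:
  assumes "r \<in> peirce m e 2 1" "s \<in> peirce m e 1 2"
    and "lie_poly m ((r + s) # replicate k e) = 0"
  shows "r = 0" "s = 0"
proof -
  have "r + s = 0 \<or> r + - s = 0"
    using assms lie_poly_peirce_off_diag_replicate[OF assms(1,2), of k] by (auto split: if_splits)
  then have "m e (r + s) = 0 \<or> m e (r + - s) = 0"
    by auto
  with assms(1,2) show "s = 0"
    unfolding peirce_21_iff peirce_12_iff by (auto simp: m_bilinear)
  with \<open>r + s = 0 \<or> r + - s = 0\<close> show "r = 0"
    by auto
qed

lemma peirce_diag_of_lie_poly_replicate: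
  assumes "lie_poly m (y # replicate (Suc k) e) = 0"
  obtains y11 y22 where "y11 \<in> peirce m e 1 1" "y22 \<in> peirce m e 2 2" "y = y11 + y22"
proof -
  obtain y11 y12 y21 y22 where
    c: "y11 \<in> peirce m e 1 1" "y12 \<in> peirce m e 1 2"
      "y21 \<in> peirce m e 2 1" "y22 \<in> peirce m e 2 2"
    and y: "y = y11 + y12 + y21 + y22"
    by (rule peirce_decomposition)
  have "commutator m y e = y21 + - y12"
    using c unfolding y peirce_11_iff peirce_12_iff peirce_21_iff peirce_22_iff
    by (simp add: commutator_def m_bilinear)
  then have "lie_poly m ((y21 + - y12) # replicate k e) = 0"
    using assms by (simp del: add_uminus_conv_diff)
  moreover have "- y12 \<in> peirce m e 1 2"
    using c(2) unfolding peirce_12_iff by (simp add: m_bilinear)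
  ultimately have "y21 = 0" "- y12 = 0"
    using peirce_off_diag_eq_0_of_lie_poly[OF c(3)] by blast+
  with c y show ?thesis
    using that by simp
qed

lemma commutator_eq_0_of_lie_poly:
  assumes "y11 \<in> peirce m e 1 1" "y22 \<in> peirce m e 2 2" "x \<in> peirce m e 1 2"
    and "lie_poly m ((y11 + y22) # x # replicate k e) = 0"
  shows "commutator m (y11 + y22) x = 0"
proof -
  note y11 = peirce_11_mult_12[OF assms(1,3)] and y22 = peirce_22_mult_12[OF assms(2,3)]
  define s where "s = m y11 x - m x y22"
  have "commutator m (y11 + y22) x = 0 + s"
    unfolding s_def commutator_def using y11 y22 by (simp add: m_bilinear)
  moreover have "s \<in> peirce m e 1 2"
    using y11 y22 unfolding s_def peirce_12_iff by (simp add: m_bilinear)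
  ultimately show ?thesis
    using peirce_off_diag_eq_0_of_lie_poly[of 0 s k] assms(4) unfolding peirce_21_iff by simp
qed

end

locale alt_ring_lie_n_der = alt_ring_idempotent m e + lie_n_der m D n
  for m :: "'a::ab_group_add \<Rightarrow> 'a \<Rightarrow> 'a" and e D n
begin

lemma lie_poly_add_defect_peirce_12:
  assumes "i \<in> {1, 2}" "a \<in> peirce m e i i" "b \<in> peirce m e i i" "x \<in> peirce m e 1 2"
  shows "lie_poly m (add_defect D a b # x # replicate (n - 2) e) = 0"
proof -
  have ae: "commutator m a e = 0"
    using assms(1,2) by (rule commutator_peirce_diag_idempotent)
  have xx: "m x x = 0"
    using assms(4) by (rule peirce_12_square)
  from assms(1) consider "i = 1" | "i = 2"
    by blast
  then show ?thesis
  proof cases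
    case 1
    then have b: "b \<in> peirce m e 1 1"
      using assms(3) by simp
    note bx = peirce_11_mult_12[OF b assms(4)]
    show ?thesis
    proof (rule lie_poly_add_defect_eq_0[where y = "- e" and v = "m b x"])
      show "commutator m a (- e) = 0"
        using ae by (simp add: commutator_def m_bilinear)
      show "commutator m (m b x) x = 0"
        using right_alternative[of b x] flexible[of x b] xx bx(2) by (simp add: commutator_def)
      show "commutator m (m b x) (- e) = commutator m b x"
        using bx unfolding peirce_12_iff by (simp add: commutator_def m_bilinear)
    qed simp
  next
    case 2
    then have b: "b \<in> peirce m e 2 2"
      using assms(3) by simp
    note xb = peirce_22_mult_12[OF b assms(4)]
    show ?thesis
    proof (rule lie_poly_add_defect_eq_0[where y = e and v = "m x b"])
      show "commutator m (m x b) x = 0"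
        using left_alternative[of x b] flexible[of x b] xx xb(2) by (simp add: commutator_def)
      show "commutator m (m x b) e = commutator m b x"
        using xb unfolding peirce_12_iff by (simp add: commutator_def)
    qed (use ae in simp_all)
  qed
qed

end

theorem lemma2p5:
  fixes m :: "'a::ab_group_add \<Rightarrow> 'a \<Rightarrow> 'a" and e :: 'a and D :: "'a \<Rightarrow> 'a"
  assumes alt: "alternative_ring m"
    and idem: "nontrivial_idempotent m e"
    and cond1: "\<And>a11 a22. a11 \<in> peirce m e 1 1 \<Longrightarrow> a22 \<in> peirce m e 2 2 \<Longrightarrow>
                  (\<forall>x\<in>peirce m e 1 2. commutator m (a11 + a22) x = 0) \<Longrightarrow>
                  a11 + a22 \<in> center m"
    and cond2: "\<And>a11 a22. a11 \<in> peirce m e 1 1 \<Longrightarrow> a22 \<in> peirce m e 2 2 \<Longrightarrow>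
                  (\<forall>x\<in>peirce m e 2 1. commutator m (a11 + a22) x = 0) \<Longrightarrow>
                  a11 + a22 \<in> center m"
    and D: "lie_type_derivation m D"
    and i: "i \<in> {1, 2::nat}"
    and a: "a \<in> peirce m e i i" and b: "b \<in> peirce m e i i"
  shows "\<exists>z\<in>center m. D (a + b) = D a + D b + z"
proof -
  obtain n where n: "2 \<le> n" "lie_n_derivation m n D"
    using D unfolding lie_type_derivation_def by blast
  interpret alt_ring_lie_n_der m e D n
    using alt idem n by unfold_locales (simp_all add: alternative_ring_def nontrivial_idempotent_def)
  define T where "T = add_defect D a b"
  have "lie_poly m (T # replicate (Suc (n - 2)) e) = 0"
    unfolding T_def replicate_Suc using commutator_peirce_diag_idempotent i a b
    by (intro lie_poly_add_defect_eq_0_of_commute) simp_all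
  then obtain t11 t22 where t: "t11 \<in> peirce m e 1 1" "t22 \<in> peirce m e 2 2" "T = t11 + t22"
    by (rule peirce_diag_of_lie_poly_replicate)
  have "commutator m T x = 0" if "x \<in> peirce m e 1 2" for x
    using commutator_eq_0_of_lie_poly[OF t(1,2) that]
      lie_poly_add_defect_peirce_12[OF i a b that] t(3) unfolding T_def by simp
  then have "T \<in> center m"
    using cond1[OF t(1,2)] t(3) by simp
  moreover have "D (a + b) = D a + D b + T"
    by (simp add: T_def add_defect_def)
  ultimately show ?thesis
    by blast
qed

end
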